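(* Assume (A1)–(A9), and suppose that for every $1\le m\le M$ and every $\rho_0>0$, $$\lim_N\sum_{n=1}^{[\lambda_N^{-1}|G_N|^\epsilon]}\ \sup_{y_0\in\partial(C_{m,N}^c),\,y\in B(y_{m,N},\rho_0)}p^{G_N}_n(y_0,y)\frac1{\sqrt n}=0.$$ Then (A10) holds.
   Context: Weighted graphs: symmetric weights $w_{y,y'}\ge0$, positive exactly on edges; connected; $w_y=\sum_{y'}w_{y,y'}$; random walk with transition probabilities $w_{y,y'}/w_y$ and $n$-step probabilities $p_n$; $d$ graph distance, $B(y,r)$ closed ball; $\partial A$ = outer vertex boundary, $\bar A=A\cup\partial A$, $\partial(A^c)$ = vertices of $A$ with a neighbor outside $A$; isomorphisms = weight-preserving bijections between vertex subsets. Cylinders $\mathcal G\times\mathbb Z$: weights $w_{(y,z),(y',z')}=w_{y,y'}1_{\{z=z'\}}+\tfrac12 1_{\{y=y',|z-z'|=1\}}$. $P_x$: random walk on $G_N\times\mathbb Z$ from $x$; $H$ hitting times. $\lambda_N$: spectral gap of the continuous-time walk (rates $w_{y,y'}$) on $G_N$, i.e. $\min\{\mathcal D_N(f,f)/\mathrm{var}_\mu f\}$ with $\mu$ uniform and $\mathcal D_N(f,f)=\frac12\sum(f(y)-f(y'))^2w_{y,y'}/|G_N|$. $[\cdot]$ integer part. Hypotheses on finite connected weighted graphs $G_N$, $M\ge1$, points $x_{m,N}=(y_{m,N},z_{m,N})\in G_N\times\mathbb Z$, $\epsilon\in(0,1)$: (A1) $c_0\le w_y\le c_1$ on $G_N$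 for constants $0<c_0\le c_1$; (A2) $\lambda_N^{-1}\le|G_N|^{2-\epsilon}$; (A3) $\min_{m\ne m'}d(x_{m,N},x_{m',N})\to\infty$; (A4) $z_{m,N}/|G_N|\to v_m\in\mathbb R$; (A5) $r_N\to\infty$, infinite connected weighted graphs $\mathbb G_m$ with fixed $o_m$, isomorphisms $\phi_{m,N}:B(y_{m,N},r_N)\to B(o_m,r_N)\subset\mathbb G_m$, $\phi_{m,N}(y_{m,N})=o_m$; (A6) $B(y_{m,N},r_N)\subseteq C_{m,N}\subseteq G_N$; (A7) infinite connected weighted graphs $\hat{\mathbb G}_m$ and isomorphisms $\psi_{m,N}$ from $\bar C_{m,N}$ onto $\bar{\mathbb C}_{m,N}\subset\hat{\mathbb G}_m$ with $\mathbb C_{m,N}=\psi_{m,N}(C_{m,N})$, $\psi_{m,N}(\partial C_{m,N})=\partial\mathbb C_{m,N}$; (A8) if $v_m=v_{m'}$ then for each $N$, $C_{m,N}=C_{m',N}$ or $C_{m,N}\cap C_{m',N}=\emptyset$; (A9) with $\hat o_{m,N}=\psi_{m,N}(y_{m,N})$, for all $\rho_0>0$, $\lim_n n^{1/2+\epsilon}\sup_{N}\sup_{\mathtt y_0\in\hat{\mathbb G}_m}\sup_{\mathtt y\in B(\hat o_{m,N},\rho_0)}p^{\hat{\mathbb G}_m}_n(\mathtt y_0,\mathtt y)=0$; (A10) for all $(\mathtt y,z)\in\mathbb G_m\times\mathbb Z$, $\lim_N\sup_{y_0\in\partial(C_{m,N}^c),z_0\in\mathbb Z}P_{(y_0,z_0)}[H_{(\phi_{m,N}^{-1}(\mathtt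 y),z_{m,N}+z)}<\lambda_N^{-1}|G_N|^\epsilon]=0$. *)

theory Defs
  imports "HOL-Analysis.Analysis"
begin

text \<open>Weighted graphs are given by a vertex set V and a weight function w,
  with w x y = 0 unless x, y are both vertices.\<close>

definition edges :: "('a \<Rightarrow> 'a \<Rightarrow> real) \<Rightarrow> ('a \<times> 'a) set" where
  "edges w = {(x, y). w x y > 0}"

definition wdeg :: "'a set \<Rightarrow> ('a \<Rightarrow> 'a \<Rightarrow> real) \<Rightarrow> 'a \<Rightarrow> real" where
  "wdeg V w x = infsum (w x) V"

definition wgraph :: "'a set \<Rightarrow> ('a \<Rightarrow> 'a \<Rightarrow> real) \<Rightarrow> bool" where
  "wgraph V w \<longleftrightarrow> V \<noteq> {}
     \<and> (\<forall>x y. w x y = w y x) \<and> (\<forall>x y. 0 \<le> w x y)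
     \<and> (\<forall>x y. w x y \<noteq> 0 \<longrightarrow> x \<in> V \<and> y \<in> V)
     \<and> (\<forall>x\<in>V. w x summable_on V)
     \<and> (\<forall>x\<in>V. \<forall>y\<in>V. (x, y) \<in> (edges w)\<^sup>*)"

fun pstep :: "'a set \<Rightarrow> ('a \<Rightarrow> 'a \<Rightarrow> real) \<Rightarrow> nat \<Rightarrow> 'a \<Rightarrow> 'a \<Rightarrow> real" where
  "pstep V w 0 x y = (if x = y then 1 else 0)"
| "pstep V w (Suc n) x y = infsum (\<lambda>x'. w x x' / wdeg V w x * pstep V w n x' y) V"

definition gdist :: "('a \<Rightarrow> 'a \<Rightarrow> real) \<Rightarrow> 'a \<Rightarrow> 'a \<Rightarrow> nat" where
  "gdist w x y = (LEAST n. (x, y) \<in> (edges w) ^^ n)"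

definition gball :: "'a set \<Rightarrow> ('a \<Rightarrow> 'a \<Rightarrow> real) \<Rightarrow> 'a \<Rightarrow> real \<Rightarrow> 'a set" where
  "gball V w x r = {y \<in> V. real (gdist w x y) \<le> r}"

text \<open>Outer vertex boundary, closure, and inner boundary (the paper's boundary of A^c).\<close>
definition obd :: "'a set \<Rightarrow> ('a \<Rightarrow> 'a \<Rightarrow> real) \<Rightarrow> 'a set \<Rightarrow> 'a set" where
  "obd V w A = {y \<in> V - A. \<exists>x\<in>A. w x y > 0}"

definition gcl :: "'a set \<Rightarrow> ('a \<Rightarrow> 'a \<Rightarrow> real) \<Rightarrow> 'a set \<Rightarrow> 'a set" where
  "gcl V w A = A \<union> obd V w A"

definition ibd :: "'a set \<Rightarrow> ('a \<Rightarrow> 'a \<Rightarrow> real) \<Rightarrow> 'a set \<Rightarrow> 'a set" where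
  "ibd V w A = {x \<in> A. \<exists>y\<in>V - A. w x y > 0}"

definition wiso :: "('a \<Rightarrow> 'a \<Rightarrow> real) \<Rightarrow> ('b \<Rightarrow> 'b \<Rightarrow> real) \<Rightarrow> ('a \<Rightarrow> 'b) \<Rightarrow> 'a set \<Rightarrow> 'b set \<Rightarrow> bool" where
  "wiso w w' f A B \<longleftrightarrow> bij_betw f A B \<and> (\<forall>a\<in>A. \<forall>b\<in>A. w' (f a) (f b) = w a b)"

definition cyl_V :: "'a set \<Rightarrow> ('a \<times> int) set" where
  "cyl_V V = V \<times> UNIV"

definition cyl_w :: "'a set \<Rightarrow> ('a \<Rightarrow> 'a \<Rightarrow> real) \<Rightarrow> ('a \<times> int) \<Rightarrow> ('a \<times> int) \<Rightarrow> real" where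
  "cyl_w V w p q = (w (fst p) (fst q) * (if snd p = snd q then 1 else 0)
      + (if fst p = fst q \<and> fst p \<in> V \<and> \<bar>snd p - snd q\<bar> = 1 then 1/2 else 0))"

text \<open>hitp V w A k x = P_x[exists n < k with X_n in A] = P_x[H_A < k].\<close>
fun hitp :: "'a set \<Rightarrow> ('a \<Rightarrow> 'a \<Rightarrow> real) \<Rightarrow> 'a set \<Rightarrow> nat \<Rightarrow> 'a \<Rightarrow> real" where
  "hitp V w A 0 x = 0"
| "hitp V w A (Suc k) x =
     (if x \<in> A then 1 else infsum (\<lambda>x'. w x x' / wdeg V w x * hitp V w A k x') V)"

text \<open>P_x[H_A < t] for real t (H_A takes values in the naturals).\<close>
definition hit_before :: "'a set \<Rightarrow> ('a \<Rightarrow> 'a \<Rightarrow> real) \<Rightarrow> 'a set \<Rightarrow> real \<Rightarrow> 'a \<Rightarrow> real" where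
  "hit_before V w A t x = hitp V w A (nat \<lceil>t\<rceil>) x"

text \<open>Spectral gap of the continuous-time walk with rates w on a finite graph.\<close>
definition dirichlet :: "'a set \<Rightarrow> ('a \<Rightarrow> 'a \<Rightarrow> real) \<Rightarrow> ('a \<Rightarrow> real) \<Rightarrow> real" where
  "dirichlet V w f = (1/2) * (\<Sum>x\<in>V. \<Sum>y\<in>V. (f x - f y)^2 * w x y) / real (card V)"

definition uvar :: "'a set \<Rightarrow> ('a \<Rightarrow> real) \<Rightarrow> real" where
  "uvar V f = (\<Sum>x\<in>V. (f x - (\<Sum>y\<in>V. f y) / real (card V))^2) / real (card V)"

definition spectral_gap :: "'a set \<Rightarrow> ('a \<Rightarrow> 'a \<Rightarrow> real) \<Rightarrow> real" where
  "spectral_gap V w = Inf {dirichlet V w f / uvar V f | f. uvar V f \<noteq> 0}"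

definition supz :: "real set \<Rightarrow> real" where
  "supz S = (if S = {} then 0 else Sup S)"

end

theory Submission
  imports Defs
begin

text \<open>
  Fix m, a model vertex gy and a height zz, and let ys be the vertex of G_N that
  corresponds to gy under the local isomorphism around y_m. If gy is at distance d from the
  root of the model, then for large N the vertex ys lies within distance d + 1 of y_m and
  strictly inside C_m (not on its inner boundary). By the union bound, the probability of hitting
  (ys, z_m + zz) before time T from (y0, z0) is at most the expected number of visits before T.
  Splitting the steps of the cylinder walk into horizontal and vertical ones, a visit after n
  steps with m horizontal and j vertical steps has weight split_weight m j times the probability
  that a simple random walk of length j on Z is at a given height, which is at most 1/sqrt(j+1).
  A generating-function estimate for split_weight turns the sum over j into a constant times
  p_m(y0, ys)/sqrt m, so the hitting probability is bounded by a constant (depending only on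
  the degree bounds c0, c1) times the heat-kernel sum of the hypothesis, which tends to 0.
  The file develops, in this order: the vertical walk and its central-binomial bound; the
  cylinder walk over a finite weighted graph and the union bound; the generating-function
  estimate; the resulting hitting bound; the pull-back of model vertices; and the theorem.
\<close>

section \<open>Simple random walk on Z and the 1/sqrt(j+1) bound\<close>

fun srw_prob :: "nat \<Rightarrow> int \<Rightarrow> real" where
  "srw_prob 0 d = (if d = 0 then 1 else 0)"
| "srw_prob (Suc j) d = (srw_prob j (d - 1) + srw_prob j (d + 1)) / 2"

definition srw_binomial :: "nat \<Rightarrow> int \<Rightarrow> real" where
  "srw_binomial j d = (if even (int j + d) \<and> - int j \<le> d
     then real (j choose nat ((int j + d) div 2)) / 2 ^ j else 0)"

lemma srw_prob_nonneg: "0 \<le> srw_prob j d"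
  by (induction j arbitrary: d) auto

lemma srw_prob_binomial: "srw_prob j d = srw_binomial j d"
proof (induction j arbitrary: d)
  case 0
  then show ?case by (auto simp: srw_binomial_def)
next
  case (Suc j)
  have rec: "srw_prob (Suc j) d = (srw_binomial j (d - 1) + srw_binomial j (d + 1)) / 2"
    using Suc by simp
  show ?case
  proof (cases "even (int (Suc j) + d) \<and> - int (Suc j) < d")
    case False
    then show ?thesis unfolding rec srw_binomial_def by auto
  next
    case True
    have "int j + d - 1 = (int (Suc j) + d) - 2" by simp
    then have "even (int j + d - 1)" using True by presburger
    then obtain q where q: "int j + d - 1 = 2 * q" by (rule evenE)
    have q0: "0 \<le> q" using q True by linarith
    have idx: "nat ((int j + (d - 1)) div 2) = nat q" "nat ((int j + (d + 1)) div 2) = Suc (nat q)"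
      "nat ((int (Suc j) + d) div 2) = Suc (nat q)"
      using q q0 by (simp_all add: algebra_simps nat_add_distrib)
    have "srw_binomial j (d - 1) = real (j choose nat q) / 2 ^ j"
      "srw_binomial j (d + 1) = real (j choose Suc (nat q)) / 2 ^ j"
      "srw_binomial (Suc j) d = real (Suc j choose Suc (nat q)) / 2 ^ Suc j"
      using q q0 True idx unfolding srw_binomial_def by (simp_all add: even_add algebra_simps)
    then show ?thesis unfolding rec by (simp add: add_divide_distrib)
  qed
qed

lemma binomial_odd_central:
  "real ((2 * Suc m) choose Suc m) = 2 * real ((2*m + 1) choose m)"
proof -
  have "(2*m + 1) choose (m + 1) = (2*m + 1) choose m"
    using central_binomial_odd[of "2*m + 1"] by simp
  then show ?thesis by simp
qed

lemma central_binomial_ratio: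
  "real ((2 * Suc m) choose Suc m) / 4 ^ Suc m
     = real ((2*m) choose m) / 4 ^ m * ((2*m + 1) / (2*m + 2))"
proof -
  have "Suc (2*m) choose Suc m = Suc (2*m) choose m"
    using central_binomial_odd[of "2*m + 1"] by simp
  then have "real (Suc m) * real (Suc (2*m) choose m) = real (Suc (2*m)) * real ((2*m) choose m)"
    using Suc_times_binomial[of m "2*m"] by (metis of_nat_mult)
  then have e: "real ((2*m + 1) choose m) = (2*m + 1) / (m + 1) * real ((2*m) choose m)"
    by (simp add: field_simps)
  show ?thesis unfolding binomial_odd_central e
    by (simp add: divide_simps add_pos_nonneg) (simp add: algebra_simps)
qed

lemma central_binomial_sq_bound: "(real ((2*m) choose m) / 4 ^ m)^2 * (2*m + 1) \<le> 1"
proof (induction m)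
  case 0
  then show ?case by simp
next
  case (Suc m)
  let ?c = "real ((2*m) choose m) / 4 ^ m" and ?q = "real m"
  have ratio: "(2*?q + 1) * (2*?q + 3) / (2*?q + 2)^2 \<le> 1"
  proof -
    have "(2*?q + 1) * (2*?q + 3) \<le> (2*?q + 2)^2" by (simp add: power2_eq_square algebra_simps)
    moreover have "0 < (2*?q + 2)^2" by simp
    ultimately show ?thesis by simp
  qed
  have "(real ((2 * Suc m) choose Suc m) / 4 ^ Suc m)^2 * (2 * Suc m + 1)
      = (?c * ((2*?q + 1) / (2*?q + 2)))^2 * (2*?q + 3)"
    unfolding central_binomial_ratio by simp
  also have "\<dots> = ?c^2 * (2*?q + 1) * ((2*?q + 1) * (2*?q + 3) / (2*?q + 2)^2)"
    by (simp add: power2_eq_square mult_ac)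
  also have "\<dots> \<le> ?c^2 * (2*?q + 1)"
    using ratio by (intro mult_left_le) auto
  also have "\<dots> \<le> 1" using Suc by (simp add: add.commute)
  finally show ?case .
qed

lemma le_inv_sqrt_of_sq:
  assumes "0 \<le> (c::real)" "c^2 * x \<le> 1" "0 < x"
  shows "c \<le> 1 / sqrt x"
proof -
  have "c * sqrt x = sqrt (c^2 * x)" using assms(1) by (simp add: real_sqrt_mult)
  also have "\<dots> \<le> 1" using assms(2) by (simp add: real_sqrt_le_1_iff)
  finally show ?thesis using assms(3) by (simp add: le_divide_eq)
qed

lemma central_binomial_le: "real (j choose (j div 2)) / 2 ^ j \<le> 1 / sqrt (real j + 1)"
proof (cases "even j")
  case True
  then obtain m where j: "j = 2*m" by (auto elim: evenE)
  have "real ((2*m) choose m) / 4 ^ m \<le> 1 / sqrt (2*m + 1)"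
    by (rule le_inv_sqrt_of_sq) (use central_binomial_sq_bound[of m] in auto)
  then show ?thesis using j by (simp add: power_mult add.commute)
next
  case False
  then obtain m where j: "j = 2*m + 1" by (auto elim: oddE)
  have p: "(2::real) ^ (2*m + 1) = 2 * 4 ^ m" by (simp add: power_mult)
  have "real (j choose (j div 2)) / 2 ^ j = real ((2*(m+1)) choose (m+1)) / 4 ^ (m+1)"
    using j binomial_odd_central[of m] unfolding p by (simp add: power_mult)
  also have "\<dots> \<le> 1 / sqrt (2*(m+1) + 1)"
    by (rule le_inv_sqrt_of_sq) (use central_binomial_sq_bound[of "m+1"] in auto)
  also have "\<dots> \<le> 1 / sqrt (real j + 1)" using j by (simp add: divide_simps)
  finally show ?thesis .
qed

text \<open>The local limit bound: simple random walk is at any given height after j steps with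
  probability at most 1/sqrt(j+1), since the central binomial probability is the largest.\<close>
lemma srw_prob_le: "srw_prob j d \<le> 1 / sqrt (real j + 1)"
proof -
  have "srw_prob j d \<le> real (j choose (j div 2)) / 2 ^ j"
    unfolding srw_prob_binomial srw_binomial_def
    by (auto intro!: divide_right_mono binomial_maximum)
  also have "\<dots> \<le> 1 / sqrt (real j + 1)" by (rule central_binomial_le)
  finally show ?thesis .
qed

section \<open>The cylinder walk over a finite graph with bounded degrees\<close>

text \<open>A finite weighted graph whose degrees lie between the constants 0 < c0 \<le> c1 (hypothesis (A1));
  all estimates below depend on the graph only through c0 and c1.\<close>
locale bounded_wgraph =
  fixes V :: "'a set" and w :: "'a \<Rightarrow> 'a \<Rightarrow> real" and c0 c1 :: real
  assumes fin: "finite V" and wg: "wgraph V w" and c0: "0 < c0" and c01: "c0 \<le> c1"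
    and deg: "\<And>x. x \<in> V \<Longrightarrow> c0 \<le> wdeg V w x \<and> wdeg V w x \<le> c1"
begin

lemma w_nonneg: "0 \<le> w x y"
  using wg unfolding wgraph_def by auto

lemma wdeg_sum: "wdeg V w x = (\<Sum>y\<in>V. w x y)"
  unfolding wdeg_def using fin by simp

lemma wdeg_nonneg: "0 \<le> wdeg V w x"
  unfolding wdeg_sum by (intro sum_nonneg w_nonneg)

lemma pstep_Suc_sum: "pstep V w (Suc n) x y = (\<Sum>x'\<in>V. w x x' / wdeg V w x * pstep V w n x' y)"
  using fin by simp

lemma pstep_nonneg: "0 \<le> pstep V w n x y"
  by (induction n arbitrary: x)
     (simp_all only: pstep_Suc_sum,
      auto intro!: sum_nonneg mult_nonneg_nonneg divide_nonneg_nonneg w_nonneg wdeg_nonneg)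

lemma cyl_weighted_sum:
  assumes u: "u \<in> V"
  shows "infsum (\<lambda>x'. cyl_w V w (u, z0) x' * F x') (cyl_V V)
       = (\<Sum>u'\<in>V. w u u' * F (u', z0)) + (F (u, z0 + 1) + F (u, z0 - 1)) / 2"
proof -
  let ?S = "V \<times> {z0 - 1, z0, z0 + 1}"
  let ?f = "\<lambda>x'. cyl_w V w (u, z0) x' * F x'"
  have "infsum ?f (cyl_V V) = infsum ?f ?S"
    by (rule infsum_cong_neutral) (auto simp: cyl_V_def cyl_w_def)
  also have "\<dots> = (\<Sum>a\<in>V. \<Sum>b\<in>{z0 - 1, z0, z0 + 1}. ?f (a, b))"
    using fin by (simp add: sum.cartesian_product')
  also have "\<dots> = (\<Sum>a\<in>V. w u a * F (a, z0) + ((if a = u then F (u, z0 - 1) / 2 else 0)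
        + (if a = u then F (u, z0 + 1) / 2 else 0)))"
    by (intro sum.cong refl) (auto simp: cyl_w_def u)
  also have "\<dots> = (\<Sum>u'\<in>V. w u u' * F (u', z0)) + (F (u, z0 + 1) + F (u, z0 - 1)) / 2"
    using u fin by (simp add: sum.distrib sum.delta' field_simps)
  finally show ?thesis .
qed

lemma cyl_wdeg: "u \<in> V \<Longrightarrow> wdeg (cyl_V V) (cyl_w V w) (u, z0) = wdeg V w u + 1"
  using cyl_weighted_sum[of u z0 "\<lambda>_. 1"] unfolding wdeg_def by (simp add: fin)

lemma cyl_step:
  assumes u: "u \<in> V"
  shows "infsum (\<lambda>x'. cyl_w V w (u, z0) x' / wdeg (cyl_V V) (cyl_w V w) (u, z0) * F x') (cyl_V V)
       = (\<Sum>u'\<in>V. w u u' / (wdeg V w u + 1) * F (u', z0))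
         + (F (u, z0 + 1) + F (u, z0 - 1)) / (2 * (wdeg V w u + 1))"
proof -
  have "(\<lambda>x'. cyl_w V w (u, z0) x' / wdeg (cyl_V V) (cyl_w V w) (u, z0) * F x')
      = (\<lambda>x'. cyl_w V w (u, z0) x' * (F x' / (wdeg V w u + 1)))"
    using cyl_wdeg[OF u] by auto
  then show ?thesis using cyl_weighted_sum[OF u, of z0 "\<lambda>x'. F x' / (wdeg V w u + 1)"]
    by (simp add: sum_divide_distrib add_divide_distrib mult.commute)
qed

lemma cyl_hitp_Suc:
  assumes "u \<in> V" "(u, z0) \<notin> A"
  shows "hitp (cyl_V V) (cyl_w V w) A (Suc k) (u, z0)
    = (\<Sum>u'\<in>V. w u u' / (wdeg V w u + 1) * hitp (cyl_V V) (cyl_w V w) A k (u', z0))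
      + (hitp (cyl_V V) (cyl_w V w) A k (u, z0 + 1) + hitp (cyl_V V) (cyl_w V w) A k (u, z0 - 1))
        / (2 * (wdeg V w u + 1))"
  using assms cyl_step[OF assms(1), of z0 "hitp (cyl_V V) (cyl_w V w) A k"]
  by (simp del: hitp.simps add: hitp.simps(2))

lemma cyl_hitp_nonneg:
  assumes "u \<in> V"
  shows "0 \<le> hitp (cyl_V V) (cyl_w V w) A k (u, z0)"
  using assms
proof (induction k arbitrary: u z0)
  case (Suc k)
  show ?case
  proof (cases "(u, z0) \<in> A")
    case False
    then show ?thesis using Suc
      by (simp del: hitp.simps add: cyl_hitp_Suc)
         (auto intro!: add_nonneg_nonneg sum_nonneg mult_nonneg_nonneg divide_nonneg_nonneg w_nonneg wdeg_nonneg)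
  qed simp
qed simp

end

section \<open>Splitting cylinder paths into horizontal and vertical steps\<close>

text \<open>split_weight V w y k j u is the probability that, during its first k + j steps, the cylinder
  walk started in column u makes exactly k horizontal and j vertical moves and ends in column y:
  from column x a horizontal move to x' has probability w x x' / (wdeg x + 1), a vertical move
  (in either direction) probability 1 / (wdeg x + 1).\<close>
fun split_weight :: "'a set \<Rightarrow> ('a \<Rightarrow> 'a \<Rightarrow> real) \<Rightarrow> 'a \<Rightarrow> nat \<Rightarrow> nat \<Rightarrow> 'a \<Rightarrow> real" where
  "split_weight V w y 0 0 u = (if u = y then 1 else 0)"
| "split_weight V w y 0 (Suc j) u = split_weight V w y 0 j u / (wdeg V w u + 1)"
| "split_weight V w y (Suc k) 0 u = (\<Sum>u'\<in>V. w u u' / (wdeg V w u + 1) * split_weight V w y k 0 u')"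
| "split_weight V w y (Suc k) (Suc j) u =
      (\<Sum>u'\<in>V. w u u' / (wdeg V w u + 1) * split_weight V w y k (Suc j) u')
      + split_weight V w y (Suc k) j u / (wdeg V w u + 1)"

text \<open>The n-step probability of going from (u, z0) to (y, zt) on the cylinder: split the n steps
  into n - j horizontal and j vertical ones; the vertical ones form a simple random walk. Only the
  first-step equation (cyl_visit_Suc) is used below.\<close>
definition cyl_visit :: "'a set \<Rightarrow> ('a \<Rightarrow> 'a \<Rightarrow> real) \<Rightarrow> 'a \<Rightarrow> int \<Rightarrow> nat \<Rightarrow> 'a \<Rightarrow> int \<Rightarrow> real" where
  "cyl_visit V w y zt n u z0 = (\<Sum>j\<le>n. split_weight V w y (n - j) j u * srw_prob j (zt - z0))"

lemma split_weight_last_step: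
  assumes "j \<le> Suc n"
  shows "split_weight V w y (Suc n - j) j u =
    (if j \<le> n then (\<Sum>u'\<in>V. w u u' / (wdeg V w u + 1) * split_weight V w y (n - j) j u') else 0)
    + (if 1 \<le> j then split_weight V w y (Suc n - j) (j - 1) u / (wdeg V w u + 1) else 0)"
proof (cases j)
  case (Suc j')
  show ?thesis
  proof (cases "j' = n")
    case False
    then obtain k where "n - j' = Suc k" using assms Suc not0_implies_Suc by fastforce
    then have "Suc n - j = Suc k" "n - j = k" using Suc assms by auto
    then show ?thesis using Suc False assms by simp
  qed (use Suc in simp)
qed simp

context bounded_wgraph begin

lemma split_weight_nonneg: "0 \<le> split_weight V w y k j u"
proof (induction k arbitrary: j u)
  case 0
  show ?case by (induction j arbitrary: u) (auto intro!: divide_nonneg_nonneg add_nonneg_nonneg wdeg_nonneg)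
next
  case (Suc k)
  show ?case
    by (induction j arbitrary: u)
       (auto intro!: add_nonneg_nonneg sum_nonneg mult_nonneg_nonneg divide_nonneg_nonneg
         w_nonneg wdeg_nonneg Suc.IH)
qed

lemma split_weight_zero_off_target: "u \<noteq> y \<Longrightarrow> split_weight V w y 0 j u = 0"
  by (induction j) auto

lemma cyl_visit_nonneg: "0 \<le> cyl_visit V w y zt n u z0"
  unfolding cyl_visit_def by (intro sum_nonneg mult_nonneg_nonneg split_weight_nonneg srw_prob_nonneg)

lemma cyl_visit_Suc:
  "cyl_visit V w y zt (Suc n) u z0
   = (\<Sum>u'\<in>V. w u u' / (wdeg V w u + 1) * cyl_visit V w y zt n u' z0)
     + (cyl_visit V w y zt n u (z0 + 1) + cyl_visit V w y zt n u (z0 - 1)) / (2 * (wdeg V w u + 1))"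
proof -
  let ?D = "wdeg V w u + 1"
  let ?G = "\<lambda>j. (\<Sum>u'\<in>V. w u u' / ?D * split_weight V w y (n - j) j u')"
  let ?s = "\<lambda>j. srw_prob j (zt - z0)"
  have "cyl_visit V w y zt (Suc n) u z0 = (\<Sum>j\<le>Suc n.
      (if j \<le> n then ?G j else 0) * ?s j
      + (if 1 \<le> j then split_weight V w y (Suc n - j) (j - 1) u / ?D else 0) * ?s j)"
    unfolding cyl_visit_def by (intro sum.cong refl) (subst split_weight_last_step, auto simp: algebra_simps)
  also have "\<dots> = (\<Sum>j\<le>Suc n. (if j \<le> n then ?G j else 0) * ?s j)
      + (\<Sum>j\<le>Suc n. (if 1 \<le> j then split_weight V w y (Suc n - j) (j - 1) u / ?D else 0) * ?s j)"
    by (rule sum.distrib)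
  also have "(\<Sum>j\<le>Suc n. (if j \<le> n then ?G j else 0) * ?s j) = (\<Sum>j\<le>n. ?G j * ?s j)"
    by (simp add: sum.atMost_Suc)
  also have "(\<Sum>j\<le>Suc n. (if 1 \<le> j then split_weight V w y (Suc n - j) (j - 1) u / ?D else 0) * ?s j)
      = (\<Sum>j\<le>n. split_weight V w y (n - j) j u / ?D * ?s (Suc j))"
    by (subst sum.atMost_Suc_shift) simp
  also have "(\<Sum>j\<le>n. ?G j * ?s j) = (\<Sum>u'\<in>V. w u u' / ?D * cyl_visit V w y zt n u' z0)"
    unfolding cyl_visit_def sum_distrib_left sum_distrib_right
    by (subst sum.swap) (simp add: algebra_simps)
  also have "(\<Sum>j\<le>n. split_weight V w y (n - j) j u / ?D * ?s (Suc j))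
      = (cyl_visit V w y zt n u (z0 + 1) + cyl_visit V w y zt n u (z0 - 1)) / (2 * ?D)"
    unfolding cyl_visit_def
    by (simp add: sum_divide_distrib sum.distrib[symmetric] algebra_simps add_divide_distrib)
  finally show ?thesis .
qed

lemma cyl_hitp_le_visits:
  assumes "u \<in> V"
  shows "hitp (cyl_V V) (cyl_w V w) {(y, zt)} k (u, z0) \<le> (\<Sum>n<k. cyl_visit V w y zt n u z0)"
  using assms
proof (induction k arbitrary: u z0)
  case (Suc k)
  have shift: "(\<Sum>n<Suc k. cyl_visit V w y zt n u z0)
      = cyl_visit V w y zt 0 u z0 + (\<Sum>n<k. cyl_visit V w y zt (Suc n) u z0)"
    by (rule sum.lessThan_Suc_shift)
  show ?case
  proof (cases "(u, z0) = (y, zt)")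
    case True
    have "cyl_visit V w y zt 0 u z0 = 1" using True by (simp add: cyl_visit_def)
    moreover have "0 \<le> (\<Sum>n<k. cyl_visit V w y zt (Suc n) u z0)" by (intro sum_nonneg cyl_visit_nonneg)
    ultimately show ?thesis using True shift by simp
  next
    case False
    let ?D = "wdeg V w u + 1"
    let ?h = "hitp (cyl_V V) (cyl_w V w) {(y, zt)} k"
    let ?B = "\<lambda>u z0. (\<Sum>n<k. cyl_visit V w y zt n u z0)"
    have "hitp (cyl_V V) (cyl_w V w) {(y, zt)} (Suc k) (u, z0)
      = (\<Sum>u'\<in>V. w u u' / ?D * ?h (u', z0)) + (?h (u, z0 + 1) + ?h (u, z0 - 1)) / (2 * ?D)"
      using False Suc.prems by (simp del: hitp.simps add: cyl_hitp_Suc)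
    also have "\<dots> \<le> (\<Sum>u'\<in>V. w u u' / ?D * ?B u' z0) + (?B u (z0 + 1) + ?B u (z0 - 1)) / (2 * ?D)"
      using Suc.IH Suc.prems
      by (intro add_mono sum_mono mult_left_mono divide_right_mono)
         (auto intro!: divide_nonneg_nonneg w_nonneg add_nonneg_nonneg wdeg_nonneg)
    also have "\<dots> = (\<Sum>n<k. cyl_visit V w y zt (Suc n) u z0)"
      by (simp add: cyl_visit_Suc sum_distrib_left sum.distrib sum_divide_distrib add_divide_distrib
          flip: sum.swap[of _ V])
    also have "\<dots> \<le> (\<Sum>n<Suc k. cyl_visit V w y zt n u z0)"
      using shift cyl_visit_nonneg by simp
    finally show ?thesis .
  qed
qed simp

end

section \<open>The generating-function estimate\<close>

lemma geometric_recursion_bound: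
  fixes S :: "nat \<Rightarrow> real"
  assumes "S 0 = 0" "\<And>J. S (Suc J) \<le> X + r * S J" "0 \<le> X" "0 \<le> r" "r < 1"
  shows "S J \<le> X / (1 - r)"
proof (induction J)
  case (Suc J)
  have "S (Suc J) \<le> X + r * (X / (1 - r))"
    using assms(2)[of J] mult_left_mono[OF Suc assms(4)] by linarith
  also have "\<dots> = X / (1 - r)" using assms(5) by (simp add: field_simps)
  finally show ?case .
qed (use assms in simp)

lemma resolvent_partial_sum_bound:
  fixes a b :: "nat \<Rightarrow> real"
  assumes a0: "a 0 = b 0" and aSuc: "\<And>j. a (Suc j) = b (Suc j) + a j / D"
    and bX: "\<And>J. (\<Sum>j<J. b j * t ^ j) \<le> X" and X: "0 \<le> X" and t: "0 \<le> t" "t < D"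
  shows "(\<Sum>j<J. a j * t ^ j) \<le> X * D / (D - t)"
proof -
  have step: "(\<Sum>j<Suc J. a j * t ^ j) = (\<Sum>j<Suc J. b j * t ^ j) + t / D * (\<Sum>j<J. a j * t ^ j)" for J
    by (subst (1 2) sum.lessThan_Suc_shift)
      (simp add: a0 aSuc sum.distrib sum_distrib_left distrib_left mult_ac)
  have "(\<Sum>j<J. a j * t ^ j) \<le> X / (1 - t / D)"
  proof (rule geometric_recursion_bound[where S = "\<lambda>J. \<Sum>j<J. a j * t ^ j"])
    show "(\<Sum>j<Suc J. a j * t ^ j) \<le> X + t / D * (\<Sum>j<J. a j * t ^ j)" for J
      using step[of J] bX[of "Suc J"] by linarith
  qed (use X t in auto)
  also have "\<dots> = X * D / (D - t)" using t by (simp add: field_simps)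
  finally show ?thesis .
qed

lemma degree_resolvent_bounds:
  fixes c0 c1 d t :: real
  assumes "0 < c0" "c0 \<le> d" "d \<le> c1" "0 < t" "t \<le> 1"
  shows "(d + 1) / (d + 1 - t) \<le> (c0 + 1) / c0" and "d / (d + 1 - t) \<le> c1 / (c1 + 1 - t)"
proof -
  have "(d + 1) / (d + 1 - t) \<le> (d + 1) / d"
    using assms by (intro divide_left_mono) auto
  also have "\<dots> \<le> (c0 + 1) / c0" using assms by (simp add: divide_simps algebra_simps)
  finally show "(d + 1) / (d + 1 - t) \<le> (c0 + 1) / c0" .
  have "d * (c1 + 1 - t) \<le> c1 * (d + 1 - t)"
    using mult_right_mono[of d c1 "1 - t"] assms by (simp add: algebra_simps)
  then show "d / (d + 1 - t) \<le> c1 / (c1 + 1 - t)" using assms by (simp add: divide_simps)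
qed

context bounded_wgraph begin

lemma split_weight_series:
  assumes t: "0 < t" "t \<le> 1" and u: "u \<in> V"
  shows "(\<Sum>j<J. split_weight V w y k j u * t ^ j)
     \<le> (c1 / (c1 + 1 - t)) ^ k * ((c0 + 1) / c0) * pstep V w k u y"
  using u
proof (induction k arbitrary: u J)
  case 0
  let ?d = "wdeg V w u" and ?X = "if u = y then 1 else (0::real)"
  have d: "c0 \<le> ?d" "?d \<le> c1" using deg[OF 0] by auto
  have start: "(\<Sum>j<J. (if j = 0 then ?X else 0) * t ^ j) \<le> ?X" for J
  proof -
    have "(\<Sum>j<J. (if j = 0 then ?X else 0) * t ^ j) = (\<Sum>j<J. if j = 0 then ?X else 0)"
      by (intro sum.cong) auto
    then show ?thesis by (simp add: sum.delta)
  qed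
  have "(\<Sum>j<J. split_weight V w y 0 j u * t ^ j) \<le> ?X * (?d + 1) / (?d + 1 - t)"
    by (rule resolvent_partial_sum_bound[where b = "\<lambda>j. if j = 0 then ?X else 0"])
       (use d c0 t start in auto)
  also have "\<dots> \<le> ((c0 + 1) / c0) * ?X"
    using degree_resolvent_bounds(1)[OF c0 d t] by auto
  finally show ?case by simp
next
  case (Suc k)
  let ?d = "wdeg V w u"
  let ?R = "(c1 / (c1 + 1 - t)) ^ k * ((c0 + 1) / c0)"
  let ?p = "pstep V w (Suc k) u y"
  have d: "c0 \<le> ?d" "?d \<le> c1" using deg[OF Suc.prems] by auto
  have R: "0 \<le> ?R" using c0 c01 t by simp
  have horizontal: "(\<Sum>j<J. (\<Sum>u'\<in>V. w u u' / (?d + 1) * split_weight V w y k j u') * t ^ j)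
      \<le> ?R * (?d / (?d + 1)) * ?p" for J
  proof -
    have "(\<Sum>j<J. (\<Sum>u'\<in>V. w u u' / (?d + 1) * split_weight V w y k j u') * t ^ j)
        = (\<Sum>u'\<in>V. w u u' / (?d + 1) * (\<Sum>j<J. split_weight V w y k j u' * t ^ j))"
      by (simp add: sum_distrib_left sum_distrib_right mult.assoc flip: sum.swap[of _ V])
    also have "\<dots> \<le> (\<Sum>u'\<in>V. w u u' / (?d + 1) * (?R * pstep V w k u' y))"
      using Suc.IH
      by (intro sum_mono mult_left_mono) (auto intro!: divide_nonneg_nonneg add_nonneg_nonneg w_nonneg wdeg_nonneg)
    also have "\<dots> = ?R / (?d + 1) * (\<Sum>u'\<in>V. w u u' * pstep V w k u' y)"
      by (simp add: sum_distrib_left sum_divide_distrib mult_ac)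
    also have "(\<Sum>u'\<in>V. w u u' * pstep V w k u' y) = ?d * ?p"
      using d c0 by (simp only: pstep_Suc_sum sum_distrib_left) (simp add: field_simps)
    finally show ?thesis by simp
  qed
  have "0 \<le> ?R * (?d / (?d + 1)) * ?p"
    using d c0 by (intro mult_nonneg_nonneg[OF mult_nonneg_nonneg[OF R]] divide_nonneg_nonneg pstep_nonneg) auto
  then have "(\<Sum>j<J. split_weight V w y (Suc k) j u * t ^ j)
      \<le> ?R * (?d / (?d + 1)) * ?p * (?d + 1) / (?d + 1 - t)"
    using horizontal d c0 t
    by (intro resolvent_partial_sum_bound[where b = "\<lambda>j. \<Sum>u'\<in>V. w u u' / (?d + 1) * split_weight V w y k j u'"])
       auto
  also have "\<dots> = ?R * ?p * (?d / (?d + 1 - t))"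
  proof -
    have "?d + 1 \<noteq> 0" using d c0 by linarith
    then have cancel: "R * (?d / (?d + 1)) * p * (?d + 1) = R * p * ?d" for R p :: real by simp
    show ?thesis by (subst cancel) (simp only: times_divide_eq_right)
  qed
  also have "\<dots> \<le> ?R * ?p * (c1 / (c1 + 1 - t))"
    using degree_resolvent_bounds(2)[OF c0 d t] by (rule mult_left_mono) (intro mult_nonneg_nonneg R pstep_nonneg)
  finally show ?case by (simp add: mult_ac)
qed

end

section \<open>Summing out the vertical walk\<close>

text \<open>Elementary estimates used to convert the generating-function bound into a 1/sqrt k bound.
  For 0 < g < 1 either (1/2)^j \<ge> g^k, or j is at least a fixed multiple of k.\<close>
definition mix_const :: "real \<Rightarrow> real" where
  "mix_const g = 1 / sqrt (ln g / ln (1/2))"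

definition tail_const :: "real \<Rightarrow> real" where
  "tail_const g = g / (1 - g)"

lemma mix_const_nonneg:
  assumes "0 < g" "g < 1"
  shows "0 \<le> mix_const g"
proof -
  have "0 < ln g / ln (1/2)" using assms by (intro divide_neg_neg) auto
  then show ?thesis unfolding mix_const_def by simp
qed

lemma inv_sqrt_le_mix:
  assumes g: "0 < g" "g < 1" and k: "1 \<le> k"
  shows "1 / sqrt (real j + 1) \<le> (1/2) ^ j / g ^ k + mix_const g / sqrt (real k)"
proof -
  define \<delta> where "\<delta> = ln g / ln (1/2)"
  have lg: "ln g < 0" using g by simp
  have lh: "ln (1/2::real) < 0" by simp
  have d0: "0 < \<delta>" unfolding \<delta>_def using lg lh by (simp add: divide_neg_neg)
  show ?thesis
  proof (cases "real j \<le> \<delta> * real k")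
    case True
    have "ln (g ^ k) = real k * ln g" using g by (simp add: ln_realpow)
    also have "\<dots> = \<delta> * real k * ln (1/2)" unfolding \<delta>_def using lh by simp
    also have "\<dots> \<le> real j * ln (1/2)" using True lh by (simp add: mult_right_mono_neg)
    also have "\<dots> = ln ((1/2::real) ^ j)" by (simp add: ln_realpow)
    finally have "g ^ k \<le> (1/2) ^ j" using g by simp
    then have "1 \<le> (1/2) ^ j / g ^ k" using g by simp
    moreover have "1 / sqrt (real j + 1) \<le> 1" by simp
    moreover have "0 \<le> mix_const g / sqrt (real k)" using g mix_const_nonneg by simp
    ultimately show ?thesis by linarith
  next
    case False
    have "1 / sqrt (real j + 1) \<le> 1 / sqrt (\<delta> * real k)"
      using False d0 k by (intro divide_left_mono real_sqrt_le_mono mult_pos_pos) auto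
    also have "\<dots> = mix_const g / sqrt (real k)"
      unfolding mix_const_def \<delta>_def[symmetric] by (simp add: real_sqrt_mult)
    also have "\<dots> \<le> (1/2) ^ j / g ^ k + mix_const g / sqrt (real k)" using g by simp
    finally show ?thesis .
  qed
qed

lemma power_le_tail:
  assumes g: "0 < g" "g < 1" and k: "1 \<le> k"
  shows "g ^ k \<le> tail_const g / sqrt (real k)"
proof -
  define h where "h = 1 / g - 1"
  have h0: "0 < h" unfolding h_def using g by (simp add: field_simps)
  have "1 + real k * h \<le> (1 + h) ^ k" using Bernoulli_inequality[of h k] h0 by simp
  also have "1 + h = 1 / g" unfolding h_def by simp
  finally have "1 + real k * h \<le> (1 / g) ^ k" .
  then have "1 / (1 / g) ^ k \<le> 1 / (real k * h)"
    using h0 k g by (intro divide_left_mono) auto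
  then have "g ^ k \<le> 1 / (real k * h)" by (simp add: power_one_over)
  also have "\<dots> = tail_const g / real k" unfolding h_def tail_const_def using g by (simp add: field_simps)
  also have "\<dots> \<le> tail_const g / sqrt (real k)"
  proof (rule divide_left_mono)
    have "real k * 1 \<le> real k * real k" using k by (intro mult_left_mono) auto
    then show "sqrt (real k) \<le> real k" using real_sqrt_le_mono by fastforce
  qed (use g k in \<open>auto simp: tail_const_def\<close>)
  finally show ?thesis .
qed

text \<open>The vertical decay rate: weighting vertical steps by 1/2 gains this factor squared per
  horizontal step.\<close>
definition decay :: "real \<Rightarrow> real" where
  "decay c = sqrt (c / (c + 1/2))"

lemma decay_bounds:
  assumes "0 < c"
  shows "0 < decay c" "decay c < 1" "decay c ^ 2 = c / (c + 1/2)"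
  using assms unfolding decay_def by (auto simp: divide_simps)

definition hit_const :: "real \<Rightarrow> real \<Rightarrow> real" where
  "hit_const c0 c1 = (c0 + 1) / c0 * (tail_const (decay c1) + mix_const (decay c1))"

context bounded_wgraph begin

lemma hit_const_nonneg: "0 \<le> hit_const c0 c1"
proof -
  have "0 < c1" using c0 c01 by linarith
  then show ?thesis
    using decay_bounds[of c1] c0 mix_const_nonneg[of "decay c1"] unfolding hit_const_def tail_const_def
    by simp
qed

text \<open>Summing out the vertical displacement: the paths with m horizontal steps contribute at
  most a constant times p_m(u, y) / sqrt m, because each vertical walk of length j is at a given
  height with probability at most 1 / sqrt (j + 1).\<close>
lemma split_weight_vertical_sum:
  assumes u: "u \<in> V" "u \<noteq> y"
  shows "(\<Sum>j<K. split_weight V w y m j u * (1 / sqrt (real j + 1)))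
     \<le> hit_const c0 c1 * (pstep V w m u y / sqrt (real m))"
proof (cases "m = 0")
  case True
  then show ?thesis using u by (simp add: split_weight_zero_off_target)
next
  case False
  then have m: "1 \<le> m" by simp
  let ?g = "decay c1" and ?K0 = "(c0 + 1) / c0" and ?p = "pstep V w m u y"
  have c1: "0 < c1" using c0 c01 by linarith
  have g: "0 < ?g" "?g < 1" "?g ^ 2 = c1 / (c1 + 1/2)" using decay_bounds[OF c1] by auto
  have K0p: "0 \<le> ?K0 * ?p" using c0 pstep_nonneg by simp
  have "(\<Sum>j<K. split_weight V w y m j u * (1 / sqrt (real j + 1)))
     \<le> (\<Sum>j<K. split_weight V w y m j u * ((1/2) ^ j / ?g ^ m + mix_const ?g / sqrt (real m)))"
    using g m by (intro sum_mono mult_left_mono inv_sqrt_le_mix split_weight_nonneg) auto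
  also have "\<dots> = 1 / ?g ^ m * (\<Sum>j<K. split_weight V w y m j u * (1/2) ^ j)
                 + mix_const ?g / sqrt (real m) * (\<Sum>j<K. split_weight V w y m j u * 1 ^ j)"
    by (simp add: sum.distrib sum_distrib_left algebra_simps)
  also have "\<dots> \<le> 1 / ?g ^ m * ((c1 / (c1 + 1 - 1/2)) ^ m * ?K0 * ?p)
                 + mix_const ?g / sqrt (real m) * ((c1 / (c1 + 1 - 1)) ^ m * ?K0 * ?p)"
    using g mix_const_nonneg[of ?g]
    by (intro add_mono mult_left_mono split_weight_series u) auto
  also have "\<dots> = ?K0 * ?p * (?g ^ m + mix_const ?g / sqrt (real m))"
  proof -
    have half: "(c1 / (c1 + 1 - 1/2)) ^ m = (?g ^ m)^2"
    proof -
      have "(?g ^ m)^2 = (?g ^ 2) ^ m" by (metis power_mult mult.commute)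
      then show ?thesis using g(3) by (simp add: add.commute)
    qed
    have one: "(c1 / (c1 + 1 - 1)) ^ m = 1" using c1 by simp
    have collect: "1 / G * (G^2 * X) + b * (1 * X) = X * (G + b)" if "G \<noteq> 0" for G X b :: real
      using that by (simp add: power2_eq_square algebra_simps)
    show ?thesis unfolding half one mult.assoc[of "_^2"] mult.assoc[of 1] by (rule collect) (use g in simp)
  qed
  also have "\<dots> \<le> ?K0 * ?p * (tail_const ?g / sqrt (real m) + mix_const ?g / sqrt (real m))"
    using g m K0p by (intro mult_left_mono add_mono power_le_tail) auto
  also have "\<dots> = hit_const c0 c1 * (?p / sqrt (real m))"
    unfolding hit_const_def add_divide_distrib[symmetric] by (simp only: divide_inverse mult_ac)
  finally show ?thesis .
qed

lemma visits_le_heat_sum: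
  assumes u: "u \<in> V" "u \<noteq> y"
  shows "(\<Sum>n<K. cyl_visit V w y zt n u z0)
     \<le> hit_const c0 c1 * (\<Sum>m<K. pstep V w m u y / sqrt (real m))"
proof -
  let ?g = "\<lambda>j m. split_weight V w y m j u * (1 / sqrt (real j + 1))"
  have "(\<Sum>n<K. cyl_visit V w y zt n u z0) \<le> (\<Sum>n<K. \<Sum>j\<le>n. ?g j (n - j))"
    unfolding cyl_visit_def by (intro sum_mono mult_left_mono srw_prob_le split_weight_nonneg)
  also have "\<dots> = (\<Sum>(j, m)\<in>{(j, m). j + m < K}. ?g j m)"
    by (rule sum.triangle_reindex[symmetric])
  also have "\<dots> \<le> (\<Sum>(j, m)\<in>{..<K} \<times> {..<K}. ?g j m)"
    by (rule sum_mono2) (auto intro!: divide_nonneg_nonneg split_weight_nonneg)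
  also have "\<dots> = (\<Sum>j<K. \<Sum>m<K. ?g j m)" by (rule sum.cartesian_product[symmetric])
  also have "\<dots> = (\<Sum>m<K. \<Sum>j<K. ?g j m)" by (rule sum.swap)
  also have "\<dots> \<le> (\<Sum>m<K. hit_const c0 c1 * (pstep V w m u y / sqrt (real m)))"
    by (intro sum_mono split_weight_vertical_sum u)
  also have "\<dots> = hit_const c0 c1 * (\<Sum>m<K. pstep V w m u y / sqrt (real m))"
    by (simp add: sum_distrib_left)
  finally show ?thesis .
qed

end

section \<open>Hitting probabilities from a set of columns\<close>

lemma supz_upper: "bdd_above S \<Longrightarrow> x \<in> S \<Longrightarrow> x \<le> supz S"
  unfolding supz_def by (auto intro: cSup_upper)

lemma supz_least: "(\<And>x. x \<in> S \<Longrightarrow> x \<le> b) \<Longrightarrow> 0 \<le> b \<Longrightarrow> supz S \<le> b"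
  unfolding supz_def by (auto intro: cSup_least)

lemma supz_nonneg: "bdd_above S \<Longrightarrow> (\<And>x. x \<in> S \<Longrightarrow> 0 \<le> x) \<Longrightarrow> 0 \<le> supz S"
  unfolding supz_def by (auto intro: order.trans[OF _ cSup_upper])

definition boundary_hit :: "'a set \<Rightarrow> ('a \<Rightarrow> 'a \<Rightarrow> real) \<Rightarrow> 'a set \<Rightarrow> ('a \<times> int) set \<Rightarrow> real \<Rightarrow> real" where
  "boundary_hit V w I A T = supz {hit_before (cyl_V V) (cyl_w V w) A T (y0, z0) | y0 z0. y0 \<in> I}"

definition boundary_heat :: "'a set \<Rightarrow> ('a \<Rightarrow> 'a \<Rightarrow> real) \<Rightarrow> 'a set \<Rightarrow> 'a set \<Rightarrow> real \<Rightarrow> real" where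
  "boundary_heat V w I Y T =
     (\<Sum>n = 1..nat \<lfloor>T\<rfloor>. supz {pstep V w n y0 yy | y0 yy. y0 \<in> I \<and> yy \<in> Y} / sqrt (real n))"

context bounded_wgraph begin

lemma pstep_values_finite: "finite {pstep V w n y0 yy | y0 yy. y0 \<in> I \<and> yy \<in> Y}" if "I \<subseteq> V" "Y \<subseteq> V"
proof (rule finite_subset)
  show "{pstep V w n y0 yy | y0 yy. y0 \<in> I \<and> yy \<in> Y} \<subseteq> (\<lambda>(a, b). pstep V w n a b) ` (V \<times> V)"
    using that by auto
qed (use fin in simp)

lemma hit_before_le_heat:
  assumes Y: "ys \<in> Y" "Y \<subseteq> V" and I: "y0 \<in> I" "I \<subseteq> V" "ys \<notin> I"
  shows "hit_before (cyl_V V) (cyl_w V w) {(ys, zt)} T (y0, z0) \<le> hit_const c0 c1 * boundary_heat V w I Y T"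
proof -
  let ?K = "nat \<lceil>T\<rceil>" and ?P = "\<lambda>n. supz {pstep V w n y0 yy | y0 yy. y0 \<in> I \<and> yy \<in> Y}"
  have u: "y0 \<in> V" "y0 \<noteq> ys" using Y I by auto
  have steps: "{..<?K} \<subseteq> insert 0 {1..nat \<lfloor>T\<rfloor>}"
  proof
    fix m assume "m \<in> {..<?K}"
    then have "int m < \<lceil>T\<rceil>" by auto
    then show "m \<in> insert 0 {1..nat \<lfloor>T\<rfloor>}" using ceiling_diff_floor_le_1[of T] by auto
  qed
  have "hit_before (cyl_V V) (cyl_w V w) {(ys, zt)} T (y0, z0) \<le> (\<Sum>n<?K. cyl_visit V w ys zt n y0 z0)"
    unfolding hit_before_def by (rule cyl_hitp_le_visits[OF u(1)])
  also have "\<dots> \<le> hit_const c0 c1 * (\<Sum>m<?K. pstep V w m y0 ys / sqrt (real m))"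
    by (rule visits_le_heat_sum[OF u])
  also have "\<dots> \<le> hit_const c0 c1 * boundary_heat V w I Y T"
  proof (rule mult_left_mono[OF _ hit_const_nonneg])
    have "(\<Sum>m<?K. pstep V w m y0 ys / sqrt (real m))
        \<le> (\<Sum>m\<in>insert 0 {1..nat \<lfloor>T\<rfloor>}. pstep V w m y0 ys / sqrt (real m))"
      using steps by (intro sum_mono2) (auto intro!: divide_nonneg_nonneg pstep_nonneg)
    also have "\<dots> = (\<Sum>m = 1..nat \<lfloor>T\<rfloor>. pstep V w m y0 ys / sqrt (real m))"
      by (subst sum.insert) auto
    also have "\<dots> \<le> (\<Sum>m = 1..nat \<lfloor>T\<rfloor>. ?P m / sqrt (real m))"
      using I Y by (intro sum_mono divide_right_mono supz_upper bdd_above_finite pstep_values_finite) auto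
    finally show "(\<Sum>m<?K. pstep V w m y0 ys / sqrt (real m)) \<le> boundary_heat V w I Y T"
      unfolding boundary_heat_def .
  qed
  finally show ?thesis .
qed

lemma boundary_hit_le_heat:
  assumes Y: "ys \<in> Y" "Y \<subseteq> V" and I: "I \<subseteq> V" "ys \<notin> I"
  shows "0 \<le> boundary_hit V w I {(ys, zt)} T
    \<and> boundary_hit V w I {(ys, zt)} T \<le> hit_const c0 c1 * boundary_heat V w I Y T"
  unfolding boundary_hit_def
proof (intro conjI supz_nonneg supz_least)
  have "0 \<le> boundary_heat V w I Y T"
    unfolding boundary_heat_def using I Y
    by (intro sum_nonneg divide_nonneg_nonneg supz_nonneg bdd_above_finite pstep_values_finite) (auto intro: pstep_nonneg)
  then show "0 \<le> hit_const c0 c1 * boundary_heat V w I Y T" using hit_const_nonneg by simp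
  show "bdd_above {hit_before (cyl_V V) (cyl_w V w) {(ys, zt)} T (y0, z0) | y0 z0. y0 \<in> I}"
    using hit_before_le_heat[OF Y _ I] by (intro bdd_aboveI) blast
qed (use hit_before_le_heat[OF Y _ I] I in \<open>auto simp: hit_before_def intro!: cyl_hitp_nonneg\<close>)

end

section \<open>Pulling back model vertices, and the theorem\<close>

lemma gdist_le: "(a, b) \<in> (edges w) ^^ n \<Longrightarrow> gdist w a b \<le> n"
  unfolding gdist_def by (rule Least_le)

lemma pullback_path:
  assumes iso: "wiso w wG \<phi> (gball V w y r) (gball VG wG ob r)" and phy: "\<phi> y = ob"
    and y: "y \<in> V" and ob: "ob \<in> VG" and r: "0 \<le> r"
    and supp: "\<And>a b. wG a b \<noteq> 0 \<Longrightarrow> a \<in> VG \<and> b \<in> VG"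
  shows "(ob, g) \<in> (edges wG) ^^ n \<Longrightarrow> real n \<le> r \<Longrightarrow>
     g \<in> gball VG wG ob r \<and> (y, inv_into (gball V w y r) \<phi> g) \<in> (edges w) ^^ n"
proof (induction n arbitrary: g)
  let ?Bl = "gball V w y r" and ?BG = "gball VG wG ob r"
  have bij: "bij_betw \<phi> ?Bl ?BG" and wp: "\<And>a b. a \<in> ?Bl \<Longrightarrow> b \<in> ?Bl \<Longrightarrow> wG (\<phi> a) (\<phi> b) = w a b"
    using iso unfolding wiso_def by auto
  {
    case 0
    have yB: "y \<in> ?Bl" using y r gdist_le[where a=y and b=y and w=w and n=0] unfolding gball_def by auto
    have obB: "ob \<in> ?BG" using ob r gdist_le[where a=ob and b=ob and w=wG and n=0] unfolding gball_def by auto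
    have "inv_into ?Bl \<phi> ob = y" using inv_into_f_f[OF bij_betw_imp_inj_on[OF bij] yB] phy by simp
    then show ?case using 0 obB by simp
  next
    case (Suc n)
    from Suc.prems(1) obtain c where c1: "(ob, c) \<in> (edges wG) ^^ n" and c2: "(c, g) \<in> edges wG"
      by (rule relpow_Suc_E)
    have IH: "c \<in> ?BG" "(y, inv_into ?Bl \<phi> c) \<in> (edges w) ^^ n"
      using Suc.IH[OF c1] Suc.prems(2) by auto
    have wcg: "wG c g > 0" using c2 unfolding edges_def by simp
    then have "g \<in> VG" using supp[of c g] by auto
    moreover have "gdist wG ob g \<le> Suc n" using Suc.prems(1) by (rule gdist_le)
    ultimately have gB: "g \<in> ?BG" using Suc.prems(2) unfolding gball_def by auto
    have img: "\<phi> ` ?Bl = ?BG" using bij by (rule bij_betw_imp_surj_on)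
    have "w (inv_into ?Bl \<phi> c) (inv_into ?Bl \<phi> g) = wG c g"
      using wp[of "inv_into ?Bl \<phi> c" "inv_into ?Bl \<phi> g"] IH(1) gB img
      by (simp add: inv_into_into f_inv_into_f)
    then have "(inv_into ?Bl \<phi> c, inv_into ?Bl \<phi> g) \<in> edges w" using wcg unfolding edges_def by simp
    then show ?case using gB IH(2) by (auto intro: relpow_Suc_I)
  }
qed

lemma pulled_back_target:
  assumes iso: "wiso w wG \<phi> (gball V w y r) (gball VG wG ob r)" and phy: "\<phi> y = ob"
    and y: "y \<in> V" and ob: "ob \<in> VG" and supp: "\<And>a b. wG a b \<noteq> 0 \<Longrightarrow> a \<in> VG \<and> b \<in> VG"
    and path: "(ob, g) \<in> (edges wG) ^^ d" and r: "real d + 1 \<le> r" and C: "gball V w y r \<subseteq> C"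
  shows "inv_into (gball V w y r) \<phi> g \<in> gball V w y (real d + 1)"
    and "inv_into (gball V w y r) \<phi> g \<notin> ibd V w C"
proof -
  let ?Bl = "gball V w y r" and ?ys = "inv_into (gball V w y r) \<phi> g"
  have pb: "g \<in> gball VG wG ob r" "(y, ?ys) \<in> (edges w) ^^ d"
    using pullback_path[OF iso phy y ob _ supp path] r by auto
  have "\<phi> ` ?Bl = gball VG wG ob r" using iso unfolding wiso_def by (auto dest: bij_betw_imp_surj_on)
  then have "?ys \<in> ?Bl" using pb(1) by (metis inv_into_into)
  then show "?ys \<in> gball V w y (real d + 1)"
    using gdist_le[OF pb(2)] unfolding gball_def by auto
  show "?ys \<notin> ibd V w C"
  proof
    assume "?ys \<in> ibd V w C"
    then obtain y' where y': "y' \<in> V - C" "w ?ys y' > 0" unfolding ibd_def by auto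
    then have "(y, y') \<in> (edges w) ^^ Suc d" using pb(2) unfolding edges_def by (auto intro: relpow_Suc_I)
    then have "gdist w y y' \<le> Suc d" by (rule gdist_le)
    then have "y' \<in> ?Bl" using y' r unfolding gball_def by auto
    then show False using C y' by auto
  qed
qed

lemma tendsto_zero_eventually_bounded:
  fixes f a :: "'b \<Rightarrow> real"
  assumes "eventually (\<lambda>N. 0 \<le> f N \<and> f N \<le> K * a N) F" and "(a \<longlongrightarrow> 0) F"
  shows "(f \<longlongrightarrow> 0) F"
proof (rule tendsto_sandwich[of "\<lambda>_. 0" _ _ "\<lambda>N. K * a N"])
  show "((\<lambda>N. K * a N) \<longlongrightarrow> 0) F" using tendsto_mult_right_zero[OF assms(2)] by simp
qed (use assms(1) in \<open>auto elim: eventually_mono\<close>)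

lemma cylinder_hit_le_heat:
  assumes G: "bounded_wgraph V w c0 c1"
    and iso: "wiso w wG \<phi> (gball V w y r) (gball VG wG ob r)" and phy: "\<phi> y = ob"
    and y: "y \<in> V" and ob: "ob \<in> VG" and supp: "\<And>a b. wG a b \<noteq> 0 \<Longrightarrow> a \<in> VG \<and> b \<in> VG"
    and path: "(ob, g) \<in> (edges wG) ^^ d" and r: "real d + 1 \<le> r"
    and C: "gball V w y r \<subseteq> C" "C \<subseteq> V"
  shows "0 \<le> boundary_hit V w (ibd V w C) {(inv_into (gball V w y r) \<phi> g, zt)} T
    \<and> boundary_hit V w (ibd V w C) {(inv_into (gball V w y r) \<phi> g, zt)} T
      \<le> hit_const c0 c1 * boundary_heat V w (ibd V w C) (gball V w y (real d + 1)) T"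
proof (rule bounded_wgraph.boundary_hit_le_heat[OF G])
  show "ibd V w C \<subseteq> V" "gball V w y (real d + 1) \<subseteq> V"
    using C unfolding ibd_def gball_def by auto
qed (use pulled_back_target[OF iso phy y ob supp path r C(1)] in auto)

text \<open>For fixed m, model vertex gy and height zz, join gy to the root o_m by a path
  of length d. Once r_N \<ge> d + 1 (which holds eventually, by (A5)), the hitting probability in (A10)
  is at most hit_const c0 c1 times the hypothesis sum with \<rho>0 = d + 1, which tends to 0.\<close>
theorem lemma7p2:
  fixes M :: nat and V :: "nat \<Rightarrow> 'v set" and w :: "nat \<Rightarrow> 'v \<Rightarrow> 'v \<Rightarrow> real"
    and y :: "nat \<Rightarrow> nat \<Rightarrow> 'v" and z :: "nat \<Rightarrow> nat \<Rightarrow> int"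
    and \<epsilon> c0 c1 :: real and v :: "nat \<Rightarrow> real" and r :: "nat \<Rightarrow> real"
    and VG :: "nat \<Rightarrow> 'g set" and wG :: "nat \<Rightarrow> 'g \<Rightarrow> 'g \<Rightarrow> real" and ob :: "nat \<Rightarrow> 'g"
    and \<phi> :: "nat \<Rightarrow> nat \<Rightarrow> 'v \<Rightarrow> 'g" and C :: "nat \<Rightarrow> nat \<Rightarrow> 'v set"
    and VH :: "nat \<Rightarrow> 'h set" and wH :: "nat \<Rightarrow> 'h \<Rightarrow> 'h \<Rightarrow> real"
    and \<psi> :: "nat \<Rightarrow> nat \<Rightarrow> 'v \<Rightarrow> 'h"
  defines "lam \<equiv> \<lambda>N. spectral_gap (V N) (w N)"
  defines "T \<equiv> \<lambda>N. (1 / lam N) * real (card (V N)) powr \<epsilon>"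
  assumes graphs: "\<And>N. finite (V N) \<and> wgraph (V N) (w N)"
    and M1: "1 \<le> M"
    and eps: "0 < \<epsilon>" "\<epsilon> < 1"
    and pts: "\<And>m N. m < M \<Longrightarrow> y m N \<in> V N"
    and A1: "0 < c0" "c0 \<le> c1" "\<And>N x. x \<in> V N \<Longrightarrow> c0 \<le> wdeg (V N) (w N) x \<and> wdeg (V N) (w N) x \<le> c1"
    and A2: "\<And>N. 1 / lam N \<le> real (card (V N)) powr (2 - \<epsilon>)"
    and A3: "\<And>m m'. m < M \<Longrightarrow> m' < M \<Longrightarrow> m \<noteq> m' \<Longrightarrow>
       filterlim (\<lambda>N. real (gdist (cyl_w (V N) (w N)) (y m N, z m N) (y m' N, z m' N))) at_top sequentially"
    and A4: "\<And>m. m < M \<Longrightarrow> (\<lambda>N. real_of_int (z m N) / real (card (V N))) \<longlonglongrightarrow> v m"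
    and A5r: "filterlim r at_top sequentially"
    and A5: "\<And>m. m < M \<Longrightarrow> wgraph (VG m) (wG m) \<and> infinite (VG m) \<and> ob m \<in> VG m \<and>
       (\<forall>N. wiso (w N) (wG m) (\<phi> m N) (gball (V N) (w N) (y m N) (r N)) (gball (VG m) (wG m) (ob m) (r N))
            \<and> \<phi> m N (y m N) = ob m)"
    and A6: "\<And>m N. m < M \<Longrightarrow> gball (V N) (w N) (y m N) (r N) \<subseteq> C m N \<and> C m N \<subseteq> V N"
    and A7: "\<And>m. m < M \<Longrightarrow> wgraph (VH m) (wH m) \<and> infinite (VH m) \<and>
       (\<forall>N. \<psi> m N ` C m N \<subseteq> VH m
         \<and> wiso (w N) (wH m) (\<psi> m N) (gcl (V N) (w N) (C m N)) (gcl (VH m) (wH m) (\<psi> m N ` C m N))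
         \<and> \<psi> m N ` obd (V N) (w N) (C m N) = obd (VH m) (wH m) (\<psi> m N ` C m N))"
    and A8: "\<And>m m' N. m < M \<Longrightarrow> m' < M \<Longrightarrow> v m = v m' \<Longrightarrow> C m N = C m' N \<or> C m N \<inter> C m' N = {}"
    and A9: "\<And>m \<rho>0. m < M \<Longrightarrow> 0 < \<rho>0 \<Longrightarrow>
       (\<lambda>n. real n powr (1/2 + \<epsilon>) * supz {pstep (VH m) (wH m) n y0 yy | N y0 yy.
            y0 \<in> VH m \<and> yy \<in> gball (VH m) (wH m) (\<psi> m N (y m N)) \<rho>0}) \<longlonglongrightarrow> 0"
    and hyp: "\<And>m \<rho>0. m < M \<Longrightarrow> 0 < \<rho>0 \<Longrightarrow>
       (\<lambda>N. \<Sum>n = 1..nat \<lfloor>T N\<rfloor>. supz {pstep (V N) (w N) n y0 yy | y0 yy.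
            y0 \<in> ibd (V N) (w N) (C m N) \<and> yy \<in> gball (V N) (w N) (y m N) \<rho>0} / sqrt (real n))
         \<longlonglongrightarrow> 0"
  shows "\<forall>m < M. \<forall>gy \<in> VG m. \<forall>zz :: int.
    (\<lambda>N. supz {hit_before (cyl_V (V N)) (cyl_w (V N) (w N))
                 {(inv_into (gball (V N) (w N) (y m N) (r N)) (\<phi> m N) gy, z m N + zz)} (T N) (y0, z0)
               | y0 z0. y0 \<in> ibd (V N) (w N) (C m N)}) \<longlonglongrightarrow> 0"
proof -
  have claim: "(\<lambda>N. boundary_hit (V N) (w N) (ibd (V N) (w N) (C m N))
      {(inv_into (gball (V N) (w N) (y m N) (r N)) (\<phi> m N) gy, z m N + zz)} (T N)) \<longlonglongrightarrow> 0"
    if m: "m < M" and gy: "gy \<in> VG m" for m gy zz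
  proof -
    have model: "wgraph (VG m) (wG m)" "ob m \<in> VG m" and local_iso:
      "\<And>N. wiso (w N) (wG m) (\<phi> m N) (gball (V N) (w N) (y m N) (r N)) (gball (VG m) (wG m) (ob m) (r N))"
      "\<And>N. \<phi> m N (y m N) = ob m"
      using A5[OF m] by auto
    have supp: "\<And>a b. wG m a b \<noteq> 0 \<Longrightarrow> a \<in> VG m \<and> b \<in> VG m"
      using model(1) unfolding wgraph_def by auto
    have "(ob m, gy) \<in> (edges (wG m))\<^sup>*" using model gy unfolding wgraph_def by auto
    then obtain d where path: "(ob m, gy) \<in> (edges (wG m)) ^^ d" using rtrancl_power by blast
    have heat: "(\<lambda>N. boundary_heat (V N) (w N) (ibd (V N) (w N) (C m N)) (gball (V N) (w N) (y m N) (real d + 1)) (T N))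
        \<longlonglongrightarrow> 0"
      using hyp[OF m, of "real d + 1"] unfolding boundary_heat_def by simp
    have far: "eventually (\<lambda>N. real d + 1 \<le> r N) sequentially" using A5r by (simp add: filterlim_at_top)
    have bounded: "bounded_wgraph (V N) (w N) c0 c1" for N using graphs[of N] A1 by unfold_locales auto
    show ?thesis
      by (rule tendsto_zero_eventually_bounded[OF eventually_mono[OF far] heat])
         (rule cylinder_hit_le_heat[OF bounded local_iso pts[OF m] model(2) supp path]; use A6[OF m] in simp)
  qed
  then show ?thesis unfolding boundary_hit_def by blast
qed

end
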